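(* Let $\boldsymbol\mu$ be a ratio set and let $\boldsymbol\alpha$ be a derivative addendum for $\boldsymbol\mu$. Let $\sum_{i\in I}T_i$ be $\boldsymbol\mu$-convergent. Then $\sum_{i\in I}T_i'$ is $\boldsymbol\alpha$-convergent.
   Context: $\mathbb T$ is the differential field of real grid-based transseries over the ordered group $\mathfrak G$ of transmonomials; $\operatorname{mag}T$ is the dominant monomial of $T\ne0$. A ratio set is a finite $\boldsymbol\mu=\{\mu_1,\dots,\mu_n\}\subset\{\mathfrak g\prec1\}$; $\boldsymbol\mu^*$, $\boldsymbol\mu^+$ are the sets $\boldsymbol\mu^{\mathbf k}$ with $\mathbf k\in\mathbb Z^n$, $\mathbf k\ge\mathbf 0$ (resp. additionally $\mathbf k\ne\mathbf0$); $\mathfrak J^{\boldsymbol\mu}$ is the group generated, $\mathfrak J^{\boldsymbol\mu,\mathbf m}=\{\boldsymbol\mu^{\mathbf k}:\mathbf k\ge\mathbf m\}$ (a grid). Monomials: $\mathfrak m\prec^{\boldsymbol\mu}\mathfrak n$ iff $\mathfrak m/\mathfrak n\in\boldsymbol\mu^+$; transseries: $A\prec^{\boldsymbol\mu}B$ iff each $\mathfrak a\in\operatorname{supp}A$ is $\prec^{\boldsymbol\mu}$ some $\mathfrak b\in\operatorname{supp}B$. $\boldsymbol\alpha$ witnesses nonzero $T$ iff $\operatorname{supp}T\subseteq(\operatorname{mag}T)\boldsymbol\alpha^*$, and generates $T$ iff $\operatorname{supp}T\subseteq\mathfrak J^{\boldsymbol\alpha,\mathbf m}$ for some $\mathbf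 m$. A derivative addendum for $\boldsymbol\mu$ is a ratio set $\boldsymbol\alpha$ with: (a) $\boldsymbol\alpha^*\supseteq\boldsymbol\mu$; (b) for every $\mathfrak m\in\mathfrak J^{\boldsymbol\mu}$, $\mathfrak m'$ is witnessed and generated by $\boldsymbol\alpha$; (c) for all $\mathfrak m,\mathfrak n\in\mathfrak J^{\boldsymbol\mu}$ with $\mathfrak m\prec^{\boldsymbol\mu}\mathfrak n$, $\mathfrak n\ne1$: $\mathfrak m'\prec^{\boldsymbol\alpha}\operatorname{mag}(\mathfrak n')$. A family $\sum_{i\in I}T_i$ is $\boldsymbol\mu$-convergent if all $T_i$ are supported by a single grid $\mathfrak J^{\boldsymbol\mu,\mathbf m}$ and the family is point-finite (each monomial lies in $\operatorname{supp}T_i$ for only finitely many $i$). *)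

theory Defs
  imports Complex_Main
begin

text \<open>The (multiplicative) ordered group of transmonomials is written
  additively as a linearly ordered abelian group 'g: the monomial 1 is 0, the product
  of monomials is +, the quotient m/n is m - n, and m \<prec> 1 means m < 0.
  A (real) series is a coefficient function 'g \<Rightarrow> real; its support is the set of
  monomials with nonzero coefficient.\<close>

definition zmul :: "int \<Rightarrow> 'g::ab_group_add \<Rightarrow> 'g" where
  "zmul k x = (if 0 \<le> k then (\<Sum>_\<in>{..<nat k}. x) else - (\<Sum>_\<in>{..<nat (- k)}. x))"

definition supp :: "('g \<Rightarrow> real) \<Rightarrow> 'g set" where
  "supp T = {g. T g \<noteq> 0}"

definition mag :: "('g::linorder \<Rightarrow> real) \<Rightarrow> 'g" where
  "mag T = (THE m. m \<in> supp T \<and> (\<forall>n\<in>supp T. n \<le> m))"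

text \<open>A ratio set {mu_1,...,mu_n} is represented by the list [mu_1,...,mu_n];
  exponent vectors are functions k :: nat \<Rightarrow> int, only indices i < n matter.\<close>
definition ratio_set :: "'g::linordered_ab_group_add list \<Rightarrow> bool" where
  "ratio_set \<mu> \<longleftrightarrow> (\<forall>x\<in>set \<mu>. x < 0)"

definition mpow :: "'g::ab_group_add list \<Rightarrow> (nat \<Rightarrow> int) \<Rightarrow> 'g" where
  "mpow \<mu> k = (\<Sum>i<length \<mu>. zmul (k i) (\<mu> ! i))"

definition rstar :: "'g::ab_group_add list \<Rightarrow> 'g set" where
  "rstar \<mu> = {mpow \<mu> k | k. \<forall>i<length \<mu>. 0 \<le> k i}"

definition rplus :: "'g::ab_group_add list \<Rightarrow> 'g set" where
  "rplus \<mu> = {mpow \<mu> k | k. (\<forall>i<length \<mu>. 0 \<le> k i) \<and> (\<exists>i<length \<mu>. k i \<noteq> 0)}"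

definition rgroup :: "'g::ab_group_add list \<Rightarrow> 'g set" where
  "rgroup \<mu> = {mpow \<mu> k | k. True}"

definition rgrid :: "'g::ab_group_add list \<Rightarrow> (nat \<Rightarrow> int) \<Rightarrow> 'g set" where
  "rgrid \<mu> m = {mpow \<mu> k | k. \<forall>i<length \<mu>. m i \<le> k i}"

definition mprec :: "'g::ab_group_add list \<Rightarrow> 'g \<Rightarrow> 'g \<Rightarrow> bool" where
  "mprec \<mu> m n \<longleftrightarrow> m - n \<in> rplus \<mu>"

definition sprec :: "'g::ab_group_add list \<Rightarrow> ('g \<Rightarrow> real) \<Rightarrow> ('g \<Rightarrow> real) \<Rightarrow> bool" where
  "sprec \<mu> A B \<longleftrightarrow> (\<forall>a\<in>supp A. \<exists>b\<in>supp B. mprec \<mu> a b)"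

definition monom :: "'g \<Rightarrow> ('g \<Rightarrow> real)" where
  "monom m = (\<lambda>g. if g = m then 1 else 0)"

definition witnesses :: "'g::linordered_ab_group_add list \<Rightarrow> ('g \<Rightarrow> real) \<Rightarrow> bool" where
  "witnesses \<alpha> T \<longleftrightarrow> supp T \<subseteq> (\<lambda>x. mag T + x) ` rstar \<alpha>"

definition generates :: "'g::ab_group_add list \<Rightarrow> ('g \<Rightarrow> real) \<Rightarrow> bool" where
  "generates \<alpha> T \<longleftrightarrow> (\<exists>m. supp T \<subseteq> rgrid \<alpha> m)"

text \<open>Derivation of the transseries field, given by the derivatives d m of the monomials
  (d m = m'): the Leibniz rule (mn)' = m'n + mn' (multiplication of a series by a
  monomial n is the shift by n), and m' \<noteq> 0 for m \<noteq> 1.\<close>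
definition shift :: "'g::ab_group_add \<Rightarrow> ('g \<Rightarrow> real) \<Rightarrow> ('g \<Rightarrow> real)" where
  "shift n T = (\<lambda>g. T (g - n))"

definition monomial_derivation :: "('g::linordered_ab_group_add \<Rightarrow> ('g \<Rightarrow> real)) \<Rightarrow> bool" where
  "monomial_derivation d \<longleftrightarrow>
     (\<forall>m n g. d (m + n) g = shift n (d m) g + shift m (d n) g) \<and>
     (\<forall>m. m \<noteq> 0 \<longrightarrow> supp (d m) \<noteq> {})"

definition sderiv :: "('g \<Rightarrow> ('g \<Rightarrow> real)) \<Rightarrow> ('g \<Rightarrow> real) \<Rightarrow> ('g \<Rightarrow> real)" where
  "sderiv d T = (\<lambda>g. \<Sum>m\<in>{m. m \<in> supp T \<and> d m g \<noteq> 0}. T m * d m g)"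

definition derivative_addendum ::
  "('g::linordered_ab_group_add \<Rightarrow> ('g \<Rightarrow> real)) \<Rightarrow> 'g list \<Rightarrow> 'g list \<Rightarrow> bool" where
  "derivative_addendum d \<mu> \<alpha> \<longleftrightarrow>
     ratio_set \<alpha> \<and>
     set \<mu> \<subseteq> rstar \<alpha> \<and>
     (\<forall>m\<in>rgroup \<mu>. witnesses \<alpha> (d m) \<and> generates \<alpha> (d m)) \<and>
     (\<forall>m\<in>rgroup \<mu>. \<forall>n\<in>rgroup \<mu>. mprec \<mu> m n \<and> n \<noteq> 0 \<longrightarrow>
         sprec \<alpha> (d m) (monom (mag (d n))))"

definition ratio_convergent :: "'g::ab_group_add list \<Rightarrow> ('i \<Rightarrow> 'g \<Rightarrow> real) \<Rightarrow> 'i set \<Rightarrow> bool" where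
  "ratio_convergent \<mu> T I \<longleftrightarrow>
     (\<exists>m. \<forall>i\<in>I. supp (T i) \<subseteq> rgrid \<mu> m) \<and>
     (\<forall>g. finite {i\<in>I. g \<in> supp (T i)})"

end

theory Submission
  imports Defs "HOL-Library.Set_Algebras"
begin

text \<open>
  Writing monomials additively, the Leibniz rule makes the support of the logarithmic derivative
  \<open>m\<dagger> = m'/m\<close> subadditive in \<open>m\<close>. Hence for every \<open>m\<close> in the group generated by \<open>\<mu>\<close> it lies in
  the finite union \<open>S\<close> of these supports for the generators \<open>\<mu>\<^sub>j\<close>, and \<open>S\<close> lies in an
  \<open>\<alpha>\<close>-grid because the \<open>\<mu>\<^sub>j'\<close> are generated by \<open>\<alpha>\<close> and \<open>\<mu>\<^sub>j \<in> \<alpha>\<^sup>*\<close>. The \<open>\<mu>\<close>-grid \<open>G\<close>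
  supporting all \<open>T\<^sub>i\<close> lies in an \<open>\<alpha>\<close>-grid too, so every \<open>T\<^sub>i'\<close> is supported by the
  \<open>\<alpha>\<close>-grid containing \<open>G + S\<close>. For point-finiteness: a monomial \<open>g\<close> of \<open>T\<^sub>i'\<close> comes from some
  \<open>a \<in> supp T\<^sub>i\<close> with \<open>a \<in> G\<close> and \<open>g - a \<in> S\<close>. Since \<open>\<alpha>\<close>-grids are reverse well-ordered, there are
  only finitely many such \<open>a\<close>, and each lies in \<open>supp T\<^sub>i\<close> for only finitely many \<open>i\<close>.
\<close>

lemma zmul_zero_left [simp]: "zmul 0 x = 0"
  by (simp add: zmul_def)

lemma zmul_zero_right [simp]: "zmul k 0 = 0"
  by (simp add: zmul_def)

lemma zmul_succ: "zmul (k + 1) x = zmul k x + x"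
proof (cases "0 \<le> k")
  case True
  then have "nat (k + 1) = Suc (nat k)" by simp
  with True show ?thesis by (simp add: zmul_def)
next
  case False
  then have "nat (- k) = Suc (nat (- (k + 1)))" by simp
  with False show ?thesis by (simp add: zmul_def)
qed

lemma zmul_pred: "zmul (k - 1) x = zmul k x - x"
  using zmul_succ[of "k - 1" x] by (simp add: algebra_simps)

lemma zmul_one_left [simp]: "zmul 1 x = x"
  using zmul_succ[of 0 x] by simp

lemma zmul_add_left: "zmul (a + b) x = zmul a x + zmul b x"
proof (induction b rule: int_induct[where k = 0])
  case (step1 i)
  have "zmul (a + (i + 1)) x = zmul (a + i) x + x"
    using zmul_succ[of "a + i" x] by (simp add: add.assoc)
  with step1.IH show ?case by (simp add: zmul_succ add.assoc)
next
  case (step2 i)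
  have "zmul (a + (i - 1)) x = zmul (a + i) x - x"
    using zmul_pred[of "a + i" x] by (simp add: add_diff_eq)
  with step2.IH show ?case by (simp add: zmul_pred add_diff_eq)
qed simp

lemma zmul_minus_left: "zmul (- k) x = - zmul k x"
  using zmul_add_left[of k "- k" x] by (simp add: add.inverse_unique)

lemma zmul_diff_left: "zmul (a - b) x = zmul a x - zmul b x"
  using zmul_add_left[of a "- b" x] by (simp add: zmul_minus_left)

lemma zmul_add_right: "zmul k (x + y) = zmul k x + zmul k y"
  by (induction k rule: int_induct[where k = 0]) (simp_all add: zmul_succ zmul_pred algebra_simps)

lemma zmul_zmul: "zmul a (zmul b x) = zmul (a * b) x"
  by (induction a rule: int_induct[where k = 0])
    (simp_all add: zmul_succ zmul_pred zmul_add_left zmul_diff_left algebra_simps)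

lemma zmul_sum_left: "zmul (\<Sum>j\<in>J. k j) x = (\<Sum>j\<in>J. zmul (k j) x)"
  by (induction J rule: infinite_finite_induct) (simp_all add: zmul_add_left)

lemma zmul_sum_right: "zmul k (\<Sum>j\<in>J. f j) = (\<Sum>j\<in>J. zmul k (f j))"
  by (induction J rule: infinite_finite_induct) (simp_all add: zmul_add_right)

lemma zmul_strict_antimono:
  fixes x :: "'g::linordered_ab_group_add"
  assumes "x < 0" "k < k'"
  shows "zmul k' x < zmul k x"
  using assms(2)
proof (induction k' rule: int_gr_induct)
  case base
  then show ?case using assms(1) by (simp add: zmul_succ)
next
  case (step i)
  then show ?case using add_strict_mono[of "zmul i x" "zmul k x" x 0] assms(1) by (simp add: zmul_succ)
qed

lemma mpow_add: "mpow \<alpha> (\<lambda>i. a i + b i) = mpow \<alpha> a + mpow \<alpha> b"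
  by (simp add: mpow_def zmul_add_left sum.distrib)

lemma mpow_uminus: "mpow \<alpha> (\<lambda>i. - c i) = - mpow \<alpha> c"
  by (simp add: mpow_def zmul_minus_left sum_negf)

lemma mpow_sum: "mpow \<alpha> (\<lambda>i. \<Sum>j\<in>J. c j i) = (\<Sum>j\<in>J. mpow \<alpha> (c j))"
  unfolding mpow_def zmul_sum_left by (rule sum.swap)

lemma zmul_mpow: "zmul k (mpow \<alpha> c) = mpow \<alpha> (\<lambda>i. k * c i)"
  by (simp add: mpow_def zmul_sum_right zmul_zmul)

lemma mpow_Cons: "mpow (x # \<alpha>) k = zmul (k 0) x + mpow \<alpha> (\<lambda>i. k (Suc i))"
  unfolding mpow_def by (simp only: length_Cons sum.lessThan_Suc_shift nth_Cons_0 nth_Cons_Suc)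

lemma nth_in_rgroup:
  assumes "j < length \<mu>"
  shows "\<mu> ! j \<in> rgroup \<mu>"
proof -
  have "mpow \<mu> (\<lambda>i. if i = j then 1 else 0) = (\<Sum>i<length \<mu>. if i = j then \<mu> ! i else 0)"
    unfolding mpow_def by (rule sum.cong) auto
  also have "\<dots> = \<mu> ! j"
    using assms by simp
  finally show ?thesis
    unfolding rgroup_def by (metis (mono_tags, lifting) mem_Collect_eq)
qed

lemma mpow_change_generators:
  assumes "\<And>j. j < length \<mu> \<Longrightarrow> \<mu> ! j = mpow \<alpha> (c j)"
  shows "mpow \<mu> k = mpow \<alpha> (\<lambda>i. \<Sum>j<length \<mu>. k j * c j i)"
  unfolding mpow_sum using assms by (simp add: mpow_def[of \<mu>] zmul_mpow)

lemma mpow_in_rgrid: "mpow \<alpha> c \<in> rgrid \<alpha> c"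
  unfolding rgrid_def by blast

lemma rgrid_add:
  assumes "a \<in> rgrid \<alpha> m" "b \<in> rgrid \<alpha> m'"
  shows "a + b \<in> rgrid \<alpha> (\<lambda>i. m i + m' i)"
proof -
  obtain k k' where "a = mpow \<alpha> k" "\<forall>i<length \<alpha>. m i \<le> k i"
    and "b = mpow \<alpha> k'" "\<forall>i<length \<alpha>. m' i \<le> k' i"
    using assms unfolding rgrid_def by blast
  then show ?thesis
    unfolding rgrid_def by (auto simp: mpow_add[symmetric] intro!: exI[of _ "\<lambda>i. k i + k' i"] add_mono)
qed

lemma rgrid_antimono: "(\<And>i. i < length \<alpha> \<Longrightarrow> m i \<le> m' i) \<Longrightarrow> rgrid \<alpha> m' \<subseteq> rgrid \<alpha> m"
  unfolding rgrid_def by force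

definition grid_based :: "'g::ab_group_add list \<Rightarrow> 'g set \<Rightarrow> bool" where
  "grid_based \<alpha> A \<longleftrightarrow> (\<exists>m. A \<subseteq> rgrid \<alpha> m)"

lemma grid_based_Un:
  assumes "grid_based \<alpha> A" "grid_based \<alpha> B"
  shows "grid_based \<alpha> (A \<union> B)"
proof -
  obtain m m' where "A \<subseteq> rgrid \<alpha> m" "B \<subseteq> rgrid \<alpha> m'"
    using assms unfolding grid_based_def by blast
  moreover have "rgrid \<alpha> m \<union> rgrid \<alpha> m' \<subseteq> rgrid \<alpha> (\<lambda>i. min (m i) (m' i))"
    by (intro Un_least rgrid_antimono) simp_all
  ultimately show ?thesis
    unfolding grid_based_def by blast
qed

lemma grid_based_UN:
  "finite J \<Longrightarrow> (\<And>j. j \<in> J \<Longrightarrow> grid_based \<alpha> (A j)) \<Longrightarrow> grid_based \<alpha> (\<Union>j\<in>J. A j)"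
  by (induction J rule: finite_induct) (simp add: grid_based_def, simp add: grid_based_Un)

lemma grid_based_set_plus:
  assumes "grid_based \<alpha> A" "grid_based \<alpha> B"
  shows "grid_based \<alpha> (A + B)"
proof -
  obtain m m' where "A \<subseteq> rgrid \<alpha> m" "B \<subseteq> rgrid \<alpha> m'"
    using assms unfolding grid_based_def by blast
  then have "A + B \<subseteq> rgrid \<alpha> (\<lambda>i. m i + m' i)"
    by (auto elim!: set_plus_elim intro: rgrid_add)
  then show ?thesis
    unfolding grid_based_def by blast
qed

lemma grid_based_translate:
  assumes "grid_based \<alpha> A"
  shows "grid_based \<alpha> (mpow \<alpha> c +o A)"
proof -
  have "grid_based \<alpha> {mpow \<alpha> c}"
    unfolding grid_based_def using mpow_in_rgrid by blast
  then have "grid_based \<alpha> ({mpow \<alpha> c} + A)"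
    using assms by (rule grid_based_set_plus)
  then show ?thesis
    by (simp add: elt_set_plus_def set_plus_def)
qed

lemma grid_based_rgrid:
  assumes "set \<mu> \<subseteq> rstar \<alpha>"
  shows "grid_based \<alpha> (rgrid \<mu> m)"
proof -
  have "\<forall>j. \<exists>c. j < length \<mu> \<longrightarrow> \<mu> ! j = mpow \<alpha> c \<and> (\<forall>i<length \<alpha>. 0 \<le> c i)"
    using assms unfolding rstar_def by (auto dest!: nth_mem)
  then obtain c where c: "\<And>j. j < length \<mu> \<Longrightarrow> \<mu> ! j = mpow \<alpha> (c j)"
    and c_nonneg: "\<And>j i. j < length \<mu> \<Longrightarrow> i < length \<alpha> \<Longrightarrow> 0 \<le> c j i"
    by (metis choice)
  have "rgrid \<mu> m \<subseteq> rgrid \<alpha> (\<lambda>i. \<Sum>j<length \<mu>. m j * c j i)"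
  proof
    fix g assume "g \<in> rgrid \<mu> m"
    then obtain k where g: "g = mpow \<mu> k" and k: "\<forall>j<length \<mu>. m j \<le> k j"
      unfolding rgrid_def by blast
    have "g = mpow \<alpha> (\<lambda>i. \<Sum>j<length \<mu>. k j * c j i)"
      unfolding g using c by (rule mpow_change_generators)
    moreover have "\<forall>i<length \<alpha>. (\<Sum>j<length \<mu>. m j * c j i) \<le> (\<Sum>j<length \<mu>. k j * c j i)"
      using k c_nonneg by (auto intro!: sum_mono mult_right_mono)
    ultimately show "g \<in> rgrid \<alpha> (\<lambda>i. \<Sum>j<length \<mu>. m j * c j i)"
      unfolding rgrid_def by blast
  qed
  then show ?thesis
    unfolding grid_based_def by blast
qed

lemma wfp_on_greater_iff:
  fixes A :: "'a::order set"
  shows "wfp_on A (>) \<longleftrightarrow> (\<nexists>f :: nat \<Rightarrow> 'a. range f \<subseteq> A \<and> strict_mono f)"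
proof -
  have "wfp_on A (>) \<longleftrightarrow> wf {(x, y). y < x \<and> x \<in> A \<and> y \<in> A}"
    by (simp only: wfp_on_iff_wfp[of A] wfp_def)
  also have "\<dots> \<longleftrightarrow> (\<nexists>f :: nat \<Rightarrow> 'a. range f \<subseteq> A \<and> strict_mono f)"
    unfolding wf_iff_no_infinite_down_chain strict_mono_Suc_iff by blast
  finally show ?thesis .
qed

lemma wfp_on_greater_decseq_subseq:
  fixes f :: "nat \<Rightarrow> 'a::linorder"
  assumes "wfp_on A (>)" "range f \<subseteq> A"
  obtains r where "strict_mono r" "decseq (f \<circ> r)"
proof -
  obtain r where r: "strict_mono r" and "monoseq (f \<circ> r)"
    using seq_monosub[of f] by (auto simp: o_def)
  then consider "decseq (f \<circ> r)" | "incseq (f \<circ> r)"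
    unfolding monoseq_iff by blast
  then show ?thesis
  proof cases
    case 1
    with r show ?thesis by (rule that)
  next
    case inc: 2
    have "range (f \<circ> r) \<subseteq> A"
      using assms(2) by auto
    then obtain z where "z \<in> range (f \<circ> r)" and max: "\<And>y. z < y \<Longrightarrow> y \<notin> range (f \<circ> r)"
      using assms(1) unfolding wfp_on_iff_ex_minimal by blast
    then obtain N where z: "z = f (r N)"
      by auto
    have "f (r (n + N)) = f (r N)" for n
    proof -
      have "f (r N) \<le> f (r (n + N))"
        using inc unfolding incseq_def by simp
      moreover have "\<not> f (r N) < f (r (n + N))"
        using max[of "f (r (n + N))"] z by auto
      ultimately show ?thesis
        by simp
    qed
    then have "decseq (f \<circ> (r \<circ> (\<lambda>n. n + N)))"
      by (simp add: decseq_def)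
    moreover have "strict_mono (r \<circ> (\<lambda>n. n + N))"
      using r by (simp add: strict_mono_def)
    ultimately show ?thesis by (rule that[rotated])
  qed
qed

lemma wfp_on_greater_set_plus:
  fixes A B :: "'g::linordered_ab_group_add set"
  assumes A: "wfp_on A (>)" and B: "wfp_on B (>)"
  shows "wfp_on (A + B) (>)"
  unfolding wfp_on_greater_iff
proof
  assume "\<exists>f :: nat \<Rightarrow> 'g. range f \<subseteq> A + B \<and> strict_mono f"
  then obtain f :: "nat \<Rightarrow> 'g" where "range f \<subseteq> A + B" and f: "strict_mono f"
    by blast
  then have "\<forall>n. \<exists>a\<in>A. \<exists>b\<in>B. f n = a + b"
    unfolding set_plus_def by blast
  then have "\<exists>a b. \<forall>n. a n \<in> A \<and> b n \<in> B \<and> f n = a n + b n"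
    by metis
  then obtain a b where a: "range a \<subseteq> A" and b: "range b \<subseteq> B" and fab: "\<And>n. f n = a n + b n"
    by blast
  obtain r where r: "strict_mono r" and "decseq (a \<circ> r)"
    using A a by (rule wfp_on_greater_decseq_subseq)
  moreover have "range (b \<circ> r) \<subseteq> B"
    using b by auto
  with B obtain s where s: "strict_mono s" and "decseq (b \<circ> r \<circ> s)"
    by (rule wfp_on_greater_decseq_subseq)
  moreover have "s 0 \<le> s 1" "r (s 0) < r (s 1)"
    using r s by (simp_all add: strict_mono_less_eq strict_mono_less)
  ultimately have "f (r (s 1)) \<le> f (r (s 0))"
    unfolding fab decseq_def by (simp add: add_mono)
  moreover have "f (r (s 0)) < f (r (s 1))"
    using f \<open>r (s 0) < r (s 1)\<close> by (rule strict_monoD)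
  ultimately show False
    by simp
qed

lemma finite_fiber_if_wfp_on_greater:
  fixes A B :: "'g::linordered_ab_group_add set"
  assumes A: "wfp_on A (>)" and B: "wfp_on B (>)"
  shows "finite {a \<in> A. g - a \<in> B}"
proof (rule ccontr)
  assume "infinite {a \<in> A. g - a \<in> B}"
  then obtain f :: "nat \<Rightarrow> 'g" where f: "inj f" and f_fiber: "range f \<subseteq> {a \<in> A. g - a \<in> B}"
    using infinite_countable_subset by blast
  have "range f \<subseteq> A" "range ((\<lambda>n. g - f n) \<circ> r) \<subseteq> B" for r
    using f_fiber by auto
  then obtain r s where r: "strict_mono r" and "decseq (f \<circ> r)"
    and s: "strict_mono s" and "decseq ((\<lambda>n. g - f n) \<circ> r \<circ> s)"
    using wfp_on_greater_decseq_subseq[OF A] wfp_on_greater_decseq_subseq[OF B] by metis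
  moreover have "s 0 \<le> s 1" "r (s 0) < r (s 1)"
    using r s by (simp_all add: strict_mono_less_eq strict_mono_less)
  ultimately have "f (r (s 1)) \<le> f (r (s 0))" "g - f (r (s 1)) \<le> g - f (r (s 0))"
    unfolding decseq_def by simp_all
  then have "f (r (s 1)) = f (r (s 0))"
    by simp
  with f \<open>r (s 0) < r (s 1)\<close> show False
    by (simp add: inj_eq)
qed

lemma zmul_less_zmul_iff:
  fixes x :: "'g::linordered_ab_group_add"
  assumes "x < 0"
  shows "zmul k x < zmul k' x \<longleftrightarrow> k' < k"
  using zmul_strict_antimono[OF assms, of k k'] zmul_strict_antimono[OF assms, of k' k]
  by (cases k k' rule: linorder_cases) auto

lemma wfp_on_greater_ray:
  fixes x :: "'g::linordered_ab_group_add"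
  assumes "x < 0"
  shows "wfp_on {zmul k x | k. k0 \<le> k} (>)"
  unfolding wfp_on_greater_iff
proof
  assume "\<exists>f :: nat \<Rightarrow> 'g. range f \<subseteq> {zmul k x | k. k0 \<le> k} \<and> strict_mono f"
  then obtain f :: "nat \<Rightarrow> 'g" where "range f \<subseteq> {zmul k x | k. k0 \<le> k}" and f: "strict_mono f"
    by blast
  then have "\<forall>n. \<exists>k. f n = zmul k x \<and> k0 \<le> k"
    by blast
  then obtain k where fk: "\<And>n. f n = zmul (k n) x" and k0: "\<And>n. k0 \<le> k n"
    by metis
  have k_decr: "k (Suc n) < k n" for n
    using strict_monoD[OF f, of n "Suc n"] assms by (simp add: fk zmul_less_zmul_iff)
  have "k n \<le> k 0 - int n" for n
  proof (induction n)
    case (Suc n)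
    then show ?case
      using k_decr[of n] by linarith
  qed simp
  from this[of "nat (k 0 - k0) + 1"] k0[of "nat (k 0 - k0) + 1"] show False
    by linarith
qed

lemma rgrid_Cons_subset: "rgrid (x # \<alpha>) m \<subseteq> {zmul k x | k. m 0 \<le> k} + rgrid \<alpha> (\<lambda>i. m (Suc i))"
proof
  fix g assume "g \<in> rgrid (x # \<alpha>) m"
  then obtain k where g: "g = mpow (x # \<alpha>) k" and k: "\<forall>i<Suc (length \<alpha>). m i \<le> k i"
    unfolding rgrid_def by auto
  have "zmul (k 0) x \<in> {zmul k x | k. m 0 \<le> k}"
    using k by auto
  moreover have "mpow \<alpha> (\<lambda>i. k (Suc i)) \<in> rgrid \<alpha> (\<lambda>i. m (Suc i))"
    using k unfolding rgrid_def by auto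
  ultimately show "g \<in> {zmul k x | k. m 0 \<le> k} + rgrid \<alpha> (\<lambda>i. m (Suc i))"
    unfolding g mpow_Cons by (rule set_plus_intro)
qed

lemma wfp_on_greater_rgrid:
  fixes \<alpha> :: "'g::linordered_ab_group_add list"
  assumes "ratio_set \<alpha>"
  shows "wfp_on (rgrid \<alpha> m) (>)"
  using assms
proof (induction \<alpha> arbitrary: m)
  case Nil
  have "rgrid ([] :: 'g list) m = {0}"
    by (simp add: rgrid_def mpow_def)
  moreover have "wfp_on {0 :: 'g} (>)"
    by (auto simp: wfp_on_iff_ex_minimal subset_singleton_iff)
  ultimately show ?case
    by (simp only:)
next
  case (Cons x \<alpha>)
  then have "x < 0" "ratio_set \<alpha>"
    by (simp_all add: ratio_set_def)
  then have "wfp_on ({zmul k x | k. m 0 \<le> k} + rgrid \<alpha> (\<lambda>i. m (Suc i))) (>)"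
    by (intro wfp_on_greater_set_plus wfp_on_greater_ray Cons.IH)
  then show ?case
    using rgrid_Cons_subset by (rule wfp_on_subset)
qed

lemma wfp_on_greater_if_grid_based:
  "ratio_set \<alpha> \<Longrightarrow> grid_based \<alpha> A \<Longrightarrow> wfp_on A (>)"
  unfolding grid_based_def using wfp_on_greater_rgrid wfp_on_subset by blast

text \<open>The support of the logarithmic derivative \<open>m\<dagger> = m'/m\<close> of the monomial \<open>m\<close>.\<close>

definition log_supp :: "('g::ab_group_add \<Rightarrow> ('g \<Rightarrow> real)) \<Rightarrow> 'g \<Rightarrow> 'g set" where
  "log_supp d m = (- m) +o supp (d m)"

lemma mem_log_supp: "h \<in> log_supp d m \<longleftrightarrow> d m (h + m) \<noteq> 0"
  by (simp add: log_supp_def supp_def set_minus_plus[symmetric])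

lemma monomial_derivation_Leibniz:
  "monomial_derivation d \<Longrightarrow> d (m + n) g = d m (g - n) + d n (g - m)"
  unfolding monomial_derivation_def shift_def by blast

lemma monomial_derivation_zero:
  assumes "monomial_derivation d"
  shows "d 0 g = 0"
  using monomial_derivation_Leibniz[OF assms, of 0 0 g] by simp

lemma log_supp_zero: "monomial_derivation d \<Longrightarrow> log_supp d 0 = {}"
  by (simp add: mem_log_supp monomial_derivation_zero set_eq_iff)

lemma log_supp_add:
  assumes "monomial_derivation d"
  shows "log_supp d (m + n) \<subseteq> log_supp d m \<union> log_supp d n"
proof
  fix h assume "h \<in> log_supp d (m + n)"
  moreover have "d (m + n) (h + (m + n)) = d m (h + m) + d n (h + n)"
    using monomial_derivation_Leibniz[OF assms, of m n "h + (m + n)"] by (simp add: algebra_simps)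
  ultimately show "h \<in> log_supp d m \<union> log_supp d n"
    by (auto simp: mem_log_supp)
qed

lemma log_supp_uminus:
  assumes "monomial_derivation d"
  shows "log_supp d (- m) \<subseteq> log_supp d m"
proof
  fix h assume "h \<in> log_supp d (- m)"
  moreover have "d m (h + m) + d (- m) (h + - m) = 0"
    using monomial_derivation_Leibniz[OF assms, of m "- m" h] monomial_derivation_zero[OF assms]
    by simp
  ultimately show "h \<in> log_supp d m"
    by (auto simp: mem_log_supp)
qed

lemma log_supp_zmul:
  assumes "monomial_derivation d"
  shows "log_supp d (zmul k m) \<subseteq> log_supp d m"
proof (induction k rule: int_induct[where k = 0])
  case base
  then show ?case
    using log_supp_zero[OF assms] by simp
next
  case (step1 i)
  then show ?case
    using log_supp_add[OF assms, of "zmul i m" m] by (auto simp: zmul_succ)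
next
  case (step2 i)
  then show ?case
    using log_supp_add[OF assms, of "zmul i m" "- m"] log_supp_uminus[OF assms, of m]
    by (auto simp: zmul_pred)
qed

lemma log_supp_sum:
  assumes "monomial_derivation d"
  shows "log_supp d (\<Sum>j\<in>J. f j) \<subseteq> (\<Union>j\<in>J. log_supp d (f j))"
proof (induction J rule: infinite_finite_induct)
  case (insert j J)
  then show ?case
    using log_supp_add[OF assms, of "f j" "sum f J"] by auto
qed (simp_all add: log_supp_zero[OF assms])

lemma log_supp_mpow:
  assumes "monomial_derivation d"
  shows "log_supp d (mpow \<mu> k) \<subseteq> (\<Union>j<length \<mu>. log_supp d (\<mu> ! j))"
  unfolding mpow_def using log_supp_sum[OF assms] log_supp_zmul[OF assms] by fastforce

lemma supp_sderiv:
  assumes "g \<in> supp (sderiv d T)"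
  obtains m where "m \<in> supp T" "g - m \<in> log_supp d m"
proof -
  have "(\<Sum>m\<in>{m. m \<in> supp T \<and> d m g \<noteq> 0}. T m * d m g) \<noteq> 0"
    using assms unfolding supp_def sderiv_def by simp
  then obtain m where "m \<in> supp T" "d m g \<noteq> 0"
    using sum.not_neutral_contains_not_neutral by blast
  then show ?thesis
    using that by (simp add: mem_log_supp)
qed

lemma grid_based_log_supp:
  assumes "derivative_addendum d \<mu> \<alpha>"
  shows "grid_based \<alpha> (\<Union>j<length \<mu>. log_supp d (\<mu> ! j))"
proof (rule grid_based_UN)
  fix j assume "j \<in> {..<length \<mu>}"
  then have "\<mu> ! j \<in> rgroup \<mu>" "\<mu> ! j \<in> rstar \<alpha>"
    using assms nth_in_rgroup unfolding derivative_addendum_def by auto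
  then obtain c where supp: "grid_based \<alpha> (supp (d (\<mu> ! j)))" and c: "\<mu> ! j = mpow \<alpha> c"
    using assms unfolding derivative_addendum_def generates_def grid_based_def rstar_def by blast
  from supp have "grid_based \<alpha> (mpow \<alpha> (\<lambda>i. - c i) +o supp (d (\<mu> ! j)))"
    by (rule grid_based_translate)
  then show "grid_based \<alpha> (log_supp d (\<mu> ! j))"
    by (simp add: log_supp_def mpow_uminus c)
qed simp

lemma ratio_convergent_if_supp_shift:
  assumes "ratio_set \<alpha>" "grid_based \<alpha> G" "grid_based \<alpha> S"
    and supp_T: "\<forall>i\<in>I. supp (T i) \<subseteq> G" and point_finite: "\<forall>a. finite {i\<in>I. a \<in> supp (T i)}"
    and shift: "\<And>i g. i \<in> I \<Longrightarrow> g \<in> supp (U i) \<Longrightarrow> \<exists>a\<in>supp (T i). g - a \<in> S"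
  shows "ratio_convergent \<alpha> U I"
proof -
  have fiber: "i \<in> (\<Union>a\<in>{a \<in> G. g - a \<in> S}. {i\<in>I. a \<in> supp (T i)})"
    if i: "i \<in> I" and g: "g \<in> supp (U i)" for i g
  proof -
    obtain a where "a \<in> supp (T i)" "g - a \<in> S"
      using shift[OF i g] by blast
    with supp_T i show ?thesis
      by blast
  qed
  have "\<forall>i\<in>I. supp (U i) \<subseteq> G + S"
  proof (intro ballI subsetI)
    fix i g assume "i \<in> I" "g \<in> supp (U i)"
    then obtain a where "a \<in> G" "g - a \<in> S"
      using fiber by blast
    then show "g \<in> G + S"
      using set_plus_intro[of a G "g - a" S] by simp
  qed
  moreover obtain m where "G + S \<subseteq> rgrid \<alpha> m"
    using grid_based_set_plus[OF assms(2,3)] unfolding grid_based_def by blast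
  moreover have "finite {i\<in>I. g \<in> supp (U i)}" for g
  proof (rule finite_subset)
    show "{i\<in>I. g \<in> supp (U i)} \<subseteq> (\<Union>a\<in>{a \<in> G. g - a \<in> S}. {i\<in>I. a \<in> supp (T i)})"
      using fiber by blast
    have "finite {a \<in> G. g - a \<in> S}"
      using assms(1-3) by (intro finite_fiber_if_wfp_on_greater wfp_on_greater_if_grid_based)
    then show "finite (\<Union>a\<in>{a \<in> G. g - a \<in> S}. {i\<in>I. a \<in> supp (T i)})"
      using point_finite by (intro finite_UN_I) auto
  qed
  ultimately show ?thesis
    unfolding ratio_convergent_def by blast
qed

theorem proposition4p7:
  fixes d :: "'g::linordered_ab_group_add \<Rightarrow> ('g \<Rightarrow> real)"
    and \<mu> \<alpha> :: "'g list"
    and T :: "'i \<Rightarrow> 'g \<Rightarrow> real"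
    and I :: "'i set"
  assumes "monomial_derivation d"
    and "ratio_set \<mu>"
    and "derivative_addendum d \<mu> \<alpha>"
    and "ratio_convergent \<mu> T I"
  shows "ratio_convergent \<alpha> (\<lambda>i. sderiv d (T i)) I"
proof -
  obtain m where grid: "\<forall>i\<in>I. supp (T i) \<subseteq> rgrid \<mu> m"
    and point_finite: "\<forall>g. finite {i\<in>I. g \<in> supp (T i)}"
    using assms(4) unfolding ratio_convergent_def by blast
  let ?S = "\<Union>j<length \<mu>. log_supp d (\<mu> ! j)"
  have ratio: "ratio_set \<alpha>" and G: "grid_based \<alpha> (rgrid \<mu> m)"
    using assms(3) grid_based_rgrid unfolding derivative_addendum_def by auto
  have S: "grid_based \<alpha> ?S"
    using assms(3) by (rule grid_based_log_supp)
  have shift: "\<exists>a\<in>supp (T i). g - a \<in> ?S"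
    if i: "i \<in> I" and g: "g \<in> supp (sderiv d (T i))" for i g
  proof -
    obtain a where a: "a \<in> supp (T i)" "g - a \<in> log_supp d a"
      using supp_sderiv[OF g] .
    moreover obtain k where "a = mpow \<mu> k"
      using a(1) grid i unfolding rgrid_def by blast
    ultimately show ?thesis
      using log_supp_mpow[OF assms(1)] by blast
  qed
  show ?thesis
    by (rule ratio_convergent_if_supp_shift[OF ratio G S grid point_finite shift])
qed

end
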